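(* Let $F\in\mathbb{C}[x]$ be a polynomial of degree $n\ge 2$, let $\Delta$ be a disk in $\mathbb{C}$, and let $N:=\lceil\log_2(1+\log_2 n)\rceil+5$, $\rho_1:=\frac{2\sqrt2}{3}$, $\rho_2:=\frac43$. Then $\left(\frac{1}{16n}\right)^{1/2^N}>\rho_1$, and: (a) if $\Delta$ is $(\rho_1,\rho_2)$-isolating for a set of $k$ roots of $F$, then $T_k^G(\Delta,\frac32)$ succeeds; (b) if $T_k^G(\Delta,K)$ succeeds for some $K\ge 1$, then $\Delta$ contains exactly $k$ roots of $F$ (counted with multiplicity).
   Context: $\Delta(m,r)$ is the open disk with center $m$, radius $r>0$, and $\lambda\cdot\Delta(m,r):=\Delta(m,\lambda r)$. A disk $\Delta$ is $(\rho_1,\rho_2)$-isolating for a set $S$ of roots of $F$ (with multiplicity) if $\rho_1\cdot\Delta$ contains exactly the roots in $S$ and $\rho_2\cdot\Delta\setminus\rho_1\cdot\Delta$ contains no root of $F$. For $\Delta=\Delta(m,r)$ put $F_\Delta(x):=F(m+rx)$. Graeffe iteration: writing $P(x)=P_e(x^2)+xP_o(x^2)$ for a polynomial $P$ of degree $n$, set $P^{[1]}(x):=(-1)^n[P_e(x)^2-xP_o(x)^2]$, and $P^{[j]}:=(P^{[j-1]})^{[1]}$, $P^{[0]}:=P$. For a polynomial $G=\sum_{i=0}^n g_ix^i$, $T_k(0,1,K,G)$ holds iff $|g_k|>K\sum_{i\ne k}|g_i|$. The test $T_k^G(\Delta,K)$ succeeds iff $T_k(0,1,K,F_\Delta^{[N]})$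 holds, where $F_\Delta^{[N]}$ is the $N$-th Graeffe iterate of $F_\Delta$. *)

theory Defs
  imports "HOL-Analysis.Analysis" "HOL-Computational_Algebra.Polynomial"
begin

definition even_part :: "complex poly \<Rightarrow> complex poly" where
  "even_part P = (\<Sum>i\<le>degree P. monom (coeff P (2*i)) i)"

definition odd_part :: "complex poly \<Rightarrow> complex poly" where
  "odd_part P = (\<Sum>i\<le>degree P. monom (coeff P (2*i+1)) i)"

definition graeffe :: "complex poly \<Rightarrow> complex poly" where
  "graeffe P = smult ((-1) ^ degree P) (even_part P ^ 2 - [:0, 1:] * odd_part P ^ 2)"

definition graeffe_iter :: "nat \<Rightarrow> complex poly \<Rightarrow> complex poly" where
  "graeffe_iter j P = (graeffe ^^ j) P"

text \<open>F_Delta(x) = F(m + r x) for the disk Delta(m,r).\<close>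
definition disk_poly :: "complex poly \<Rightarrow> complex \<Rightarrow> real \<Rightarrow> complex poly" where
  "disk_poly F m r = pcompose F [:m, complex_of_real r:]"

definition T_test :: "nat \<Rightarrow> real \<Rightarrow> complex poly \<Rightarrow> bool" where
  "T_test k K G \<longleftrightarrow> norm (coeff G k) > K * (\<Sum>i\<in>{..degree G} - {k}. norm (coeff G i))"

definition T_graeffe :: "nat \<Rightarrow> complex poly \<Rightarrow> nat \<Rightarrow> complex \<Rightarrow> real \<Rightarrow> real \<Rightarrow> bool" where
  "T_graeffe N F k m r K \<longleftrightarrow> T_test k K (graeffe_iter N (disk_poly F m r))"

definition root_count :: "complex poly \<Rightarrow> complex set \<Rightarrow> nat" where
  "root_count F S = (\<Sum>z\<in>{z\<in>S. poly F z = 0}. order z F)"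

definition isolating :: "complex poly \<Rightarrow> real \<Rightarrow> real \<Rightarrow> complex \<Rightarrow> real \<Rightarrow> nat \<Rightarrow> bool" where
  "isolating F \<rho>1 \<rho>2 m r k \<longleftrightarrow>
     root_count F (ball m (\<rho>1 * r)) = k \<and>
     (\<forall>z\<in>ball m (\<rho>2 * r) - ball m (\<rho>1 * r). poly F z \<noteq> 0)"

end

theory Submission
  imports Defs "HOL-Complex_Analysis.Complex_Analysis"
    "HOL-Computational_Algebra.Fundamental_Theorem_Algebra"
begin

(*
  Factor F = c * prod (x - z) over its roots z.  Rescaling the disk to the unit disk and applying
  N Graeffe steps turns every root into w = ((z - m) / r)^(2^N), so the roots inside rho1 * Delta
  become smaller than rho1^(2^N) < 1/(16n) and those outside rho2 * Delta larger than its inverse.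
  Writing the factors of the large roots as -w (1 - x/w), the iterate is a scalar multiple of a
  polynomial within coefficient 1-norm (1 + 1/(16n))^n - 1 < 2/3 of x^k, which makes T_k succeed.
  Conversely, if T_k succeeds then the k-th monomial dominates all other terms on the unit circle,
  so by Rouche's theorem (Pellet's theorem) the iterate has exactly k roots in the unit disk; these
  are the images of the roots of F in Delta, since |w| < 1 iff z lies in Delta.
*)

section \<open>Graeffe iteration of a factored polynomial\<close>

lemma poly_altdef_le:
  fixes x :: "'a :: {comm_semiring_0, semiring_1}"
  assumes "degree p \<le> n"
  shows "poly p x = (\<Sum>i\<le>n. coeff p i * x ^ i)"
  unfolding poly_altdef using assms
  by (intro sum.mono_neutral_left) (auto simp: coeff_eq_0)

lemma poly_even_odd_part:
  "poly P x = poly (even_part P) (x\<^sup>2) + x * poly (odd_part P) (x\<^sup>2)"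
proof -
  let ?d = "degree P"
  have "poly P x = (\<Sum>j\<le>Suc (2 * ?d). coeff P j * x ^ j)"
    by (rule poly_altdef_le) simp
  also have "\<dots> = (\<Sum>i\<le>?d. coeff P (2*i) * x ^ (2*i) + coeff P (Suc (2*i)) * x ^ Suc (2*i))"
    by (rule sum.in_pairs_0)
  also have "\<dots> = poly (even_part P) (x\<^sup>2) + x * poly (odd_part P) (x\<^sup>2)"
    by (simp add: even_part_def odd_part_def poly_sum poly_monom sum.distrib
        sum_distrib_left algebra_simps flip: power_mult)
  finally show ?thesis .
qed

lemma poly_graeffe_square:
  "poly (graeffe P) (x\<^sup>2) = (-1) ^ degree P * poly P x * poly P (-x)"
  unfolding poly_even_odd_part[of P x] poly_even_odd_part[of P "-x"]
  by (simp add: graeffe_def algebra_simps power2_eq_square)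

lemma proots_linear_factors: "proots (\<Prod>w\<in>#A. [:-w, 1:]) = (A :: complex multiset)"
proof (induction A)
  case (add x A)
  have "(\<Prod>w\<in>#A. [:-w, 1:] :: complex poly) \<noteq> 0"
    by auto
  with add show ?case
    by (simp add: proots_mult del: mult_pCons_left)
qed simp

lemma degree_linear_factors: "degree (\<Prod>w\<in>#A. [:-w, 1:] :: complex poly) = size A"
  by (metis proots_linear_factors size_proots_complex)

lemma graeffe_smult_linear_factors:
  fixes c :: complex
  assumes "c \<noteq> 0"
  shows "graeffe (smult c (\<Prod>w\<in>#A. [:-w, 1:])) = smult (c\<^sup>2) (\<Prod>w\<in>#A. [:-(w\<^sup>2), 1:])"
proof (rule poly_eq_poly_eq_iff[THEN iffD1, OF ext])
  fix y :: complex
  let ?x = "csqrt y"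
  have deg: "degree (smult c (\<Prod>w\<in>#A. [:-w, 1:])) = size A"
    using assms by (simp add: degree_linear_factors)
  have "poly (graeffe (smult c (\<Prod>w\<in>#A. [:-w, 1:]))) (?x\<^sup>2)
      = c\<^sup>2 * ((\<Prod>w\<in>#A. -1) * (\<Prod>w\<in>#A. ?x - w) * (\<Prod>w\<in>#A. -w - ?x))"
    unfolding poly_graeffe_square deg by (simp add: poly_prod_mset power2_eq_square)
  also have "\<dots> = c\<^sup>2 * (\<Prod>w\<in>#A. -1 * (?x - w) * (-w - ?x))"
    by (simp only: prod_mset.distrib)
  also have "\<dots> = c\<^sup>2 * (\<Prod>w\<in>#A. ?x\<^sup>2 - w\<^sup>2)"
    by (simp add: algebra_simps power2_eq_square)
  finally show "poly (graeffe (smult c (\<Prod>w\<in>#A. [:-w, 1:]))) y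
      = poly (smult (c\<^sup>2) (\<Prod>w\<in>#A. [:-(w\<^sup>2), 1:])) y"
    by (simp add: poly_prod_mset)
qed

lemma graeffe_iter_smult_linear_factors:
  fixes c :: complex
  assumes "c \<noteq> 0"
  shows "graeffe_iter j (smult c (\<Prod>w\<in>#A. [:-w, 1:]))
       = smult (c ^ 2 ^ j) (\<Prod>w\<in>#A. [:-(w ^ 2 ^ j), 1:])"
proof (induction j)
  case (Suc j)
  have "graeffe_iter (Suc j) (smult c (\<Prod>w\<in>#A. [:-w, 1:]))
      = graeffe (smult (c ^ 2 ^ j) (\<Prod>w\<in>#image_mset (\<lambda>w. w ^ 2 ^ j) A. [:-w, 1:]))"
    using Suc by (simp add: graeffe_iter_def image_mset.compositionality o_def)
  also have "\<dots> = smult ((c ^ 2 ^ j)\<^sup>2) (\<Prod>w\<in>#image_mset (\<lambda>w. w ^ 2 ^ j) A. [:-(w\<^sup>2), 1:])"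
    using assms by (simp add: graeffe_smult_linear_factors)
  also have "\<dots> = smult (c ^ 2 ^ Suc j) (\<Prod>w\<in>#A. [:-(w ^ 2 ^ Suc j), 1:])"
    by (simp add: image_mset.compositionality o_def mult.commute flip: power_mult)
  finally show ?case .
qed (simp add: graeffe_iter_def)

lemma pcompose_linear_factors:
  fixes r :: complex
  assumes "r \<noteq> 0"
  shows "pcompose (\<Prod>w\<in>#A. [:-w, 1:]) [:m, r:]
       = smult (r ^ size A) (\<Prod>w\<in>#A. [:-((w - m) / r), 1:])"
proof (induction A)
  case (add x A)
  have "pcompose [:-x, 1:] [:m, r:] = smult r [:-((x - m) / r), 1:]"
    using assms by (simp add: pcompose_pCons field_simps)
  then have "pcompose (\<Prod>w\<in>#add_mset x A. [:-w, 1:]) [:m, r:]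
      = smult r [:-((x - m) / r), 1:] * smult (r ^ size A) (\<Prod>w\<in>#A. [:-((w - m) / r), 1:])"
    by (simp only: add.IH prod_mset.add_mset image_mset_add_mset pcompose_mult)
  then show ?case
    by (simp only: mult_smult_left mult_smult_right smult_smult prod_mset.add_mset
        image_mset_add_mset size_add_mset power_Suc mult.commute)
qed (simp add: one_pCons)

definition disk_graeffe_root :: "complex \<Rightarrow> real \<Rightarrow> nat \<Rightarrow> complex \<Rightarrow> complex" where
  "disk_graeffe_root m r N w = ((w - m) / of_real r) ^ 2 ^ N"

lemma norm_disk_graeffe_root:
  assumes "r > 0"
  shows "norm (disk_graeffe_root m r N w) = (dist m w / r) ^ 2 ^ N"
  using assms by (simp add: disk_graeffe_root_def norm_power norm_divide dist_norm norm_minus_commute)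

lemma graeffe_iter_disk_poly:
  assumes "F \<noteq> 0" and "r > 0"
  obtains c where "c \<noteq> 0"
    and "graeffe_iter N (disk_poly F m r)
       = smult c (\<Prod>w\<in>#image_mset (disk_graeffe_root m r N) (proots F). [:-w, 1:])"
proof
  let ?c = "lead_coeff F * of_real r ^ degree F"
  have "disk_poly F m r = smult (lead_coeff F) (pcompose (\<Prod>w\<in>#proots F. [:-w, 1:]) [:m, of_real r:])"
    unfolding disk_poly_def by (subst (1) complex_poly_decompose_multiset[symmetric]) (simp add: pcompose_smult)
  also have "\<dots> = smult ?c (\<Prod>w\<in>#image_mset (\<lambda>w. (w - m) / of_real r) (proots F). [:-w, 1:])"
    using assms by (simp add: pcompose_linear_factors size_proots_complex image_mset.compositionality o_def)
  finally have disk: "disk_poly F m r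
      = smult ?c (\<Prod>w\<in>#image_mset (\<lambda>w. (w - m) / of_real r) (proots F). [:-w, 1:])" .
  show "graeffe_iter N (disk_poly F m r)
       = smult (?c ^ 2 ^ N) (\<Prod>w\<in>#image_mset (disk_graeffe_root m r N) (proots F). [:-w, 1:])"
    unfolding disk using assms
    by (subst graeffe_iter_smult_linear_factors)
      (simp_all add: image_mset.compositionality o_def disk_graeffe_root_def)
  show "?c ^ 2 ^ N \<noteq> 0"
    using assms by simp
qed

section \<open>Pellet's theorem\<close>

lemma root_count_eq_size_proots:
  assumes "F \<noteq> 0"
  shows "root_count F S = size (filter_mset (\<lambda>z. z \<in> S) (proots F))"
proof -
  have "size (filter_mset (\<lambda>z. z \<in> S) (proots F))
      = (\<Sum>z\<in>set_mset (filter_mset (\<lambda>z. z \<in> S) (proots F)). count (proots F) z)"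
    by (simp add: size_multiset_overloaded_eq)
  also have "set_mset (filter_mset (\<lambda>z. z \<in> S) (proots F)) = {z\<in>S. poly F z = 0}"
    using assms by auto
  finally show ?thesis
    using assms by (simp add: root_count_def)
qed

lemma zorder_poly:
  fixes p :: "complex poly"
  assumes "p \<noteq> 0"
  shows "zorder (poly p) z = int (order z p)"
proof -
  obtain q where q: "p = [:-z, 1:] ^ order z p * q" "\<not> [:-z, 1:] dvd q"
    using order_decomp[OF assms] by blast
  have "poly q z \<noteq> 0"
    using q(2) by (simp add: poly_eq_0_iff_dvd)
  then show ?thesis
  proof (intro zorder_eqI[where S = UNIV and g = "poly q"])
    fix w
    show "poly p w = poly q w * (w - z) powi int (order z p)"
      by (subst q(1)) (simp add: power_int_of_nat mult.commute)
  qed (auto intro: holomorphic_intros)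
qed

lemma winding_sum_eq_root_count:
  fixes p :: "complex poly"
  assumes "p \<noteq> 0" and "\<rho> > 0" and "\<And>z. dist a z = \<rho> \<Longrightarrow> poly p z \<noteq> 0"
  shows "(\<Sum>z | poly p z = 0. winding_number (circlepath a \<rho>) z * of_int (zorder (poly p) z))
       = of_nat (root_count p (ball a \<rho>))"
proof -
  have wind: "winding_number (circlepath a \<rho>) z = (if z \<in> ball a \<rho> then 1 else 0)"
    if "poly p z = 0" for z
  proof (cases "z \<in> ball a \<rho>")
    case True
    then show ?thesis
      by (simp add: winding_number_circlepath dist_norm norm_minus_commute)
  next
    case False
    with assms(3)[of z] that have "z \<notin> cball a \<rho>"
      by auto
    with assms(2) have "winding_number (circlepath a \<rho>) z = 0"
      by (intro winding_number_zero_outside[of _ "cball a \<rho>"]) auto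
    with False show ?thesis
      by simp
  qed
  have "(\<Sum>z | poly p z = 0. winding_number (circlepath a \<rho>) z * of_int (zorder (poly p) z))
      = (\<Sum>z | poly p z = 0. if z \<in> ball a \<rho> then of_nat (order z p) else 0)"
    by (rule sum.cong) (auto simp: wind zorder_poly[OF assms(1)])
  also have "\<dots> = (\<Sum>z\<in>{z\<in>ball a \<rho>. poly p z = 0}. of_nat (order z p))"
    using poly_roots_finite[OF assms(1)] by (simp add: sum.If_cases Int_def conj_commute)
  finally show ?thesis
    by (simp add: root_count_def)
qed

lemma root_count_Rouche:
  fixes p q :: "complex poly"
  assumes "\<rho> > 0" and less: "\<And>z. dist a z = \<rho> \<Longrightarrow> norm (poly q z) < norm (poly p z)"
  shows "root_count (p + q) (ball a \<rho>) = root_count p (ball a \<rho>)"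
proof -
  have circle: "poly p z \<noteq> 0" "poly (p + q) z \<noteq> 0" if "dist a z = \<rho>" for z
    using less[OF that] norm_triangle_ineq2[of "poly p z" "- poly q z"] by auto
  have "dist a (a + of_real \<rho>) = \<rho>"
    using assms(1) by (simp add: dist_norm)
  from circle[OF this] have "p \<noteq> 0" "p + q \<noteq> 0"
    by (metis poly_0)+
  have "(\<Sum>z | poly (p + q) z = 0. winding_number (circlepath a \<rho>) z * of_int (zorder (poly (p + q)) z))
      = (\<Sum>z | poly p z = 0. winding_number (circlepath a \<rho>) z * of_int (zorder (poly p) z))"
  proof -
    have sum: "(\<lambda>z. poly p z + poly q z) = poly (p + q)"
      by auto
    have "finite {z. poly p z + poly q z = 0}"
      using poly_roots_finite[OF \<open>p + q \<noteq> 0\<close>] by simp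
    then show ?thesis
      using Rouche_theorem[of UNIV "poly p" "poly q" "circlepath a \<rho>"] assms
        poly_roots_finite[OF \<open>p \<noteq> 0\<close>]
      by (simp add: sum connected_UNIV holomorphic_intros)
  qed
  then have "of_nat (root_count (p + q) (ball a \<rho>)) = (of_nat (root_count p (ball a \<rho>)) :: complex)"
    by (simp only: winding_sum_eq_root_count[OF \<open>p + q \<noteq> 0\<close> assms(1) circle(2)]
        winding_sum_eq_root_count[OF \<open>p \<noteq> 0\<close> assms(1) circle(1)])
  then show ?thesis
    by (simp only: of_nat_eq_iff)
qed

lemma root_count_monom:
  assumes "c \<noteq> 0" and "\<rho> > 0"
  shows "root_count (monom c k) (ball 0 \<rho>) = k"
proof (cases "k = 0")
  case False
  with assms have "{z \<in> ball 0 \<rho>. poly (monom c k) z = 0} = {0}"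
    by (auto simp: poly_monom)
  with assms show ?thesis
    by (simp add: root_count_def)
qed (use assms in \<open>simp add: root_count_def poly_monom\<close>)

lemma norm_poly_le_sum_norm_coeff:
  fixes G :: "complex poly"
  assumes "norm z = 1" and "k \<le> degree G"
  shows "norm (poly (G - monom (coeff G k) k) z) \<le> (\<Sum>i\<in>{..degree G} - {k}. norm (coeff G i))"
proof -
  let ?H = "G - monom (coeff G k) k"
  have "degree ?H \<le> degree G"
    using assms(2) by (intro degree_diff_le) (auto intro: order_trans[OF degree_monom_le])
  then have "poly ?H z = (\<Sum>i\<le>degree G. coeff ?H i * z ^ i)"
    by (rule poly_altdef_le)
  also have "\<dots> = (\<Sum>i\<in>{..degree G} - {k}. coeff G i * z ^ i)"
    using assms(2) by (subst sum.remove[of _ k]) (auto simp: coeff_monom intro!: sum.cong)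
  also have "norm \<dots> \<le> (\<Sum>i\<in>{..degree G} - {k}. norm (coeff G i * z ^ i))"
    by (rule norm_sum)
  finally show ?thesis
    using assms(1) by (simp add: norm_mult norm_power)
qed

theorem Pellet_T_test:
  assumes "T_test k K G" and "K \<ge> 1"
  shows "root_count G (ball 0 1) = k"
proof -
  define S where "S = (\<Sum>i\<in>{..degree G} - {k}. norm (coeff G i))"
  have "S \<ge> 0"
    by (simp add: S_def sum_nonneg)
  then have "S \<le> K * S"
    using mult_right_mono[OF \<open>K \<ge> 1\<close>] by simp
  with assms(1) have less: "S < norm (coeff G k)"
    unfolding T_test_def S_def[symmetric] by linarith
  then have c: "coeff G k \<noteq> 0"
    using \<open>S \<ge> 0\<close> by auto
  then have "k \<le> degree G"
    by (rule le_degree)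
  have "root_count (monom (coeff G k) k + (G - monom (coeff G k) k)) (ball 0 1)
      = root_count (monom (coeff G k) k) (ball 0 1)"
  proof (rule root_count_Rouche)
    fix z :: complex
    assume "dist 0 z = 1"
    then have "norm z = 1"
      by simp
    with \<open>k \<le> degree G\<close> less show "norm (poly (G - monom (coeff G k) k) z) < norm (poly (monom (coeff G k) k) z)"
      using norm_poly_le_sum_norm_coeff[of z k G]
      by (simp add: S_def poly_monom norm_mult norm_power)
  qed simp
  with c show ?thesis
    by (simp add: root_count_monom)
qed

section \<open>Polynomials close to a monomial in coefficient 1-norm\<close>

definition l1_norm :: "complex poly \<Rightarrow> real" where
  "l1_norm p = (\<Sum>i\<le>degree p. norm (coeff p i))"

lemma l1_norm_altdef_le:
  assumes "degree p \<le> n"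
  shows "l1_norm p = (\<Sum>i\<le>n. norm (coeff p i))"
  unfolding l1_norm_def using assms
  by (intro sum.mono_neutral_left) (auto simp: coeff_eq_0)

lemma l1_norm_nonneg: "l1_norm p \<ge> 0"
  by (simp add: l1_norm_def sum_nonneg)

lemma l1_norm_add: "l1_norm (p + q) \<le> l1_norm p + l1_norm q"
proof -
  let ?n = "max (degree p) (degree q)"
  have "l1_norm (p + q) = (\<Sum>i\<le>?n. norm (coeff p i + coeff q i))"
    by (subst l1_norm_altdef_le[of _ ?n]) (simp_all add: degree_add_le)
  also have "\<dots> \<le> (\<Sum>i\<le>?n. norm (coeff p i) + norm (coeff q i))"
    by (intro sum_mono norm_triangle_ineq)
  also have "\<dots> = l1_norm p + l1_norm q"
    by (simp add: sum.distrib l1_norm_altdef_le[of p ?n] l1_norm_altdef_le[of q ?n])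
  finally show ?thesis .
qed

lemma l1_norm_smult: "l1_norm (smult a p) = norm a * l1_norm p"
  by (cases "a = 0") (simp_all add: l1_norm_def sum_distrib_left norm_mult)

lemma l1_norm_pCons: "l1_norm (pCons a p) = norm a + l1_norm p"
proof -
  have "l1_norm (pCons a p) = (\<Sum>i\<le>Suc (degree p). norm (coeff (pCons a p) i))"
    by (rule l1_norm_altdef_le) (simp add: degree_pCons_le)
  also have "\<dots> = norm a + l1_norm p"
    by (subst sum.atMost_Suc_shift) (simp add: l1_norm_def)
  finally show ?thesis .
qed

lemma l1_norm_0 [simp]: "l1_norm 0 = 0"
  by (simp add: l1_norm_def)

lemma l1_norm_one [simp]: "l1_norm 1 = 1"
  by (simp add: l1_norm_def)

lemma l1_norm_monom [simp]: "l1_norm (monom c k) = norm c"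
proof -
  have "l1_norm (monom c k) = (\<Sum>i\<le>k. norm (coeff (monom c k) i))"
    by (rule l1_norm_altdef_le[OF degree_monom_le])
  also have "\<dots> = (\<Sum>i\<le>k. if i = k then norm c else 0)"
    by (rule sum.cong) (auto simp: coeff_monom)
  finally show ?thesis
    by simp
qed

lemma l1_norm_mult: "l1_norm (p * q) \<le> l1_norm p * l1_norm q"
proof (induction p)
  case (pCons a p)
  have "l1_norm (pCons a p * q) \<le> l1_norm (smult a q) + l1_norm (pCons 0 (p * q))"
    using l1_norm_add by simp
  also have "\<dots> \<le> norm a * l1_norm q + l1_norm p * l1_norm q"
    using pCons.IH by (simp add: l1_norm_smult l1_norm_pCons)
  finally show ?case
    by (simp add: l1_norm_pCons algebra_simps)
qed simp

lemma l1_norm_prod_mset_le: "l1_norm (\<Prod>x\<in>#A. f x) \<le> (\<Prod>x\<in>#A. l1_norm (f x))"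
  by (induction A) (auto intro: order_trans[OF l1_norm_mult] mult_left_mono l1_norm_nonneg)

lemma l1_norm_mult_diff:
  assumes "l1_norm (f1 - g1) \<le> d1" and "l1_norm g2 \<le> b" and "l1_norm (f2 - g2) \<le> d2"
  shows "l1_norm (f1 * f2 - g1 * g2) \<le> (l1_norm g1 + d1) * (b + d2) - l1_norm g1 * b"
proof -
  have "f1 * f2 - g1 * g2 = (f1 - g1) * (g2 + (f2 - g2)) + g1 * (f2 - g2)"
    by (simp add: algebra_simps)
  then have "l1_norm (f1 * f2 - g1 * g2)
      \<le> l1_norm ((f1 - g1) * (g2 + (f2 - g2))) + l1_norm (g1 * (f2 - g2))"
    by (simp only: l1_norm_add)
  also have "\<dots> \<le> l1_norm (f1 - g1) * (l1_norm g2 + l1_norm (f2 - g2)) + l1_norm g1 * l1_norm (f2 - g2)"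
    using l1_norm_nonneg
    by (intro add_mono order_trans[OF l1_norm_mult] mult_left_mono l1_norm_add) auto
  also have "\<dots> \<le> d1 * (b + d2) + l1_norm g1 * d2"
    using assms l1_norm_nonneg order_trans[OF l1_norm_nonneg assms(1)]
    by (intro add_mono mult_mono) auto
  finally show ?thesis
    by (simp add: algebra_simps)
qed

lemma l1_norm_prod_mset_diff:
  "l1_norm ((\<Prod>x\<in>#A. f x) - (\<Prod>x\<in>#A. g x))
     \<le> (\<Prod>x\<in>#A. l1_norm (g x) + l1_norm (f x - g x)) - (\<Prod>x\<in>#A. l1_norm (g x))"
proof (induction A)
  case (add x A)
  have "l1_norm (f x * (\<Prod>x\<in>#A. f x) - g x * (\<Prod>x\<in>#A. g x))
      \<le> (l1_norm (g x) + l1_norm (f x - g x))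
          * ((\<Prod>x\<in>#A. l1_norm (g x)) + ((\<Prod>x\<in>#A. l1_norm (g x) + l1_norm (f x - g x)) - (\<Prod>x\<in>#A. l1_norm (g x))))
        - l1_norm (g x) * (\<Prod>x\<in>#A. l1_norm (g x))"
    using add.IH by (intro l1_norm_mult_diff l1_norm_prod_mset_le order_refl)
  then show ?case
    by simp
qed simp

lemma l1_norm_linear_factors_minus_monom:
  "l1_norm ((\<Prod>w\<in>#A. [:-w, 1:]) - monom 1 (size A)) \<le> (\<Prod>w\<in>#A. 1 + norm w) - 1"
proof -
  have "[:-w, 1:] - monom 1 1 = [:-w:]" for w :: complex
    by (simp add: monom_Suc)
  then show ?thesis
    using l1_norm_prod_mset_diff[of "\<lambda>w. [:-w, 1:]" A "\<lambda>_. monom 1 1"]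
    by (simp add: monom_power l1_norm_pCons add.commute)
qed

lemma l1_norm_reversed_factors_minus_one:
  "l1_norm ((\<Prod>w\<in>#A. [:1, -w:]) - 1) \<le> (\<Prod>w\<in>#A. 1 + norm w) - 1"
proof -
  have "[:1, -w:] - 1 = pCons 0 [:-w:]" for w :: complex
    by (simp add: one_pCons)
  then show ?thesis
    using l1_norm_prod_mset_diff[of "\<lambda>w. [:1, -w:]" A "\<lambda>_. 1"]
    by (simp add: l1_norm_pCons add.commute)
qed

lemma T_test_smult:
  assumes "c \<noteq> 0"
  shows "T_test k K (smult c H) \<longleftrightarrow> T_test k K H"
  using assms by (simp add: T_test_def norm_mult sum_distrib_left[symmetric] mult.left_commute)

lemma T_test_if_l1_norm_close:
  assumes "K \<ge> 1" and "k \<le> degree H" and "K * l1_norm (H - monom 1 k) < 1"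
  shows "T_test k K H"
proof -
  let ?R = "H - monom 1 k"
  define others where "others = (\<Sum>i\<in>{..degree H} - {k}. norm (coeff H i))"
  have "degree ?R \<le> degree H"
    using assms(2) by (intro degree_diff_le) (auto intro: order_trans[OF degree_monom_le])
  then have "l1_norm ?R = norm (coeff ?R k) + (\<Sum>i\<in>{..degree H} - {k}. norm (coeff ?R i))"
    using assms(2) by (simp add: l1_norm_altdef_le sum.remove[of _ k])
  also have "(\<Sum>i\<in>{..degree H} - {k}. norm (coeff ?R i)) = others"
    unfolding others_def by (rule sum.cong) (auto simp: coeff_monom)
  finally have l1: "l1_norm ?R = norm (coeff H k - 1) + others"
    by simp
  have "1 \<le> norm (coeff H k) + norm (coeff H k - 1)"
    using norm_triangle_ineq4[of "coeff H k" "coeff H k - 1"] by simp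
  moreover have "norm (coeff H k - 1) \<le> K * norm (coeff H k - 1)"
    using mult_right_mono[OF assms(1) norm_ge_zero] by simp
  ultimately show ?thesis
    using assms(3) unfolding T_test_def others_def[symmetric] l1 by (simp add: algebra_simps)
qed

lemma linear_factors_reversed:
  assumes "\<And>w. w \<in># B \<Longrightarrow> w \<noteq> (0 :: complex)"
  shows "(\<Prod>w\<in>#B. [:-w, 1:]) = smult (\<Prod>w\<in>#B. -w) (\<Prod>w\<in>#B. [:1, -inverse w:])"
  using assms
proof (induction B)
  case (add x B)
  then have "[:-x, 1:] = smult (-x) [:1, -inverse x:]"
    by simp
  with add show ?case
    by (simp only: prod_mset.add_mset image_mset_add_mset mult_smult_left mult_smult_right
        smult_smult mult.commute) simp
qed simp

lemma prod_mset_le_power: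
  fixes f :: "'a \<Rightarrow> 'b :: linordered_semidom"
  assumes "\<And>x. x \<in># A \<Longrightarrow> 0 \<le> f x \<and> f x \<le> b"
  shows "(\<Prod>x\<in>#A. f x) \<le> b ^ size A"
proof -
  have "0 \<le> (\<Prod>x\<in>#A. f x) \<and> (\<Prod>x\<in>#A. f x) \<le> b ^ size A"
    using assms
  proof (induction A)
    case (add x A)
    then have "0 \<le> f x" "f x \<le> b" "0 \<le> (\<Prod>x\<in>#A. f x)" "(\<Prod>x\<in>#A. f x) \<le> b ^ size A"
      by auto
    then show ?case
      by (auto intro!: mult_mono)
  qed simp
  then show ?thesis
    by simp
qed

lemma prod_one_plus_norm_le_power:
  assumes "\<And>w. w \<in># A \<Longrightarrow> norm w \<le> e"
  shows "(\<Prod>w\<in>#A. 1 + norm w) \<le> (1 + e) ^ size A"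
  using assms by (intro prod_mset_le_power) auto

lemma l1_norm_linear_and_reversed_factors:
  assumes "\<And>w. w \<in># A \<Longrightarrow> norm w \<le> e" and "\<And>w. w \<in># B \<Longrightarrow> norm w \<le> e"
  shows "l1_norm ((\<Prod>w\<in>#A. [:-w, 1:]) * (\<Prod>w\<in>#B. [:1, -w:]) - monom 1 (size A))
     \<le> (1 + e) ^ size (A + B) - 1"
proof -
  have "0 \<le> (\<Prod>w\<in>#A. 1 + norm w)" and "0 \<le> (\<Prod>w\<in>#B. 1 + norm w)"
    by (induction A, auto) (induction B, auto)
  moreover have pA: "(\<Prod>w\<in>#A. 1 + norm w) \<le> (1 + e) ^ size A"
    using assms(1) by (rule prod_one_plus_norm_le_power)
  moreover have "(\<Prod>w\<in>#B. 1 + norm w) \<le> (1 + e) ^ size B"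
    using assms(2) by (rule prod_one_plus_norm_le_power)
  ultimately have "(\<Prod>w\<in>#A. 1 + norm w) * (\<Prod>w\<in>#B. 1 + norm w) \<le> (1 + e) ^ size A * (1 + e) ^ size B"
    by (intro mult_mono) (auto intro: order_trans[OF _ pA])
  with l1_norm_mult_diff[OF l1_norm_linear_factors_minus_monom _ l1_norm_reversed_factors_minus_one, of 1 A B]
  show ?thesis
    by (simp add: power_add)
qed

lemma T_test_separated_linear_factors:
  fixes A B :: "complex multiset"
  assumes "c \<noteq> 0" and "K \<ge> 1"
    and small: "\<And>w. w \<in># A \<Longrightarrow> norm w \<le> e"
    and large: "\<And>w. w \<in># B \<Longrightarrow> 1 \<le> e * norm w"
    and "K * ((1 + e) ^ size (A + B) - 1) < 1"
  shows "T_test (size A) K (smult c (\<Prod>w\<in>#A + B. [:-w, 1:]))"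
proof -
  define P where "P = (\<Prod>w\<in>#A. [:-w, 1:])"
  \<comment> \<open>the factor of a large root \<open>w\<close> is rewritten as \<open>-w (1 - x / w)\<close>\<close>
  define Q where "Q = (\<Prod>w\<in>#image_mset inverse B. [:1, -w:])"
  have B0: "w \<noteq> 0" if "w \<in># B" for w
    using large[OF that] by auto
  have "(\<Prod>w\<in>#A + B. [:-w, 1:]) = smult (\<Prod>w\<in>#B. -w) (P * Q)"
    using linear_factors_reversed[of B] B0
    by (simp add: P_def Q_def mult_smult_right image_mset.compositionality o_def)
  moreover have "(\<Prod>w\<in>#B. -w) \<noteq> 0"
    using B0 by auto
  ultimately have T: "T_test (size A) K (smult c (\<Prod>w\<in>#A + B. [:-w, 1:])) \<longleftrightarrow> T_test (size A) K (P * Q)"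
    using assms(1) by (simp add: T_test_smult)
  have "poly Q 0 = 1"
    by (simp add: Q_def poly_prod_mset)
  then have "Q \<noteq> 0"
    by (metis poly_0 zero_neq_one)
  moreover have "P \<noteq> 0"
    by (auto simp: P_def)
  ultimately have "degree (P * Q) \<ge> size A"
    by (simp add: degree_mult_eq P_def degree_linear_factors)
  have "norm w \<le> e" if w: "w \<in># image_mset inverse B" for w
  proof -
    obtain v where "v \<in># B" and "w = inverse v"
      using w by auto
    with large[of v] B0[of v] have "inverse (norm v) \<le> e"
      by (simp add: field_simps)
    with \<open>w = inverse v\<close> show ?thesis
      by (simp add: norm_inverse)
  qed
  then have "l1_norm (P * Q - monom 1 (size A)) \<le> (1 + e) ^ size (A + B) - 1"
    using l1_norm_linear_and_reversed_factors[of A e "image_mset inverse B"] small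
    by (simp add: P_def Q_def)
  then have "K * l1_norm (P * Q - monom 1 (size A)) < 1"
    using assms(5) mult_left_mono[OF _ order_trans[OF zero_le_one assms(2)]] by (smt (verit))
  with T \<open>degree (P * Q) \<ge> size A\<close> assms(2) show ?thesis
    by (simp add: T_test_if_l1_norm_close)
qed

section \<open>The Graeffe test on a disk\<close>

lemma root_count_ball_if_T_graeffe:
  assumes "F \<noteq> 0" and "r > 0" and "K \<ge> 1" and "T_graeffe N F k m r K"
  shows "root_count F (ball m r) = k"
proof -
  let ?h = "disk_graeffe_root m r N"
  obtain c where "c \<noteq> 0" and G: "graeffe_iter N (disk_poly F m r)
      = smult c (\<Prod>w\<in>#image_mset ?h (proots F). [:-w, 1:])"
    using graeffe_iter_disk_poly[OF assms(1,2)] by blast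
  have inside: "norm (?h w) < 1 \<longleftrightarrow> dist m w < r" for w
    using assms(2) by (simp add: norm_disk_graeffe_root power_less_one_iff divide_less_eq)
  have "k = root_count (graeffe_iter N (disk_poly F m r)) (ball 0 1)"
    using Pellet_T_test assms(3,4) unfolding T_graeffe_def by metis
  also have "\<dots> = size (filter_mset (\<lambda>w. w \<in> ball 0 1) (image_mset ?h (proots F)))"
    using \<open>c \<noteq> 0\<close> by (subst root_count_eq_size_proots) (auto simp: G proots_linear_factors)
  also have "\<dots> = size (filter_mset (\<lambda>w. w \<in> ball m r) (proots F))"
    by (simp add: inside flip: image_mset_filter_mset_swap)
  finally show ?thesis
    using assms(1) by (simp add: root_count_eq_size_proots)
qed

lemma T_graeffe_if_isolated:
  assumes "F \<noteq> 0" and "r > 0" and "\<rho> > 0" and "K \<ge> 1"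
    and "\<rho> ^ 2 ^ N \<le> e" and "K * ((1 + e) ^ degree F - 1) < 1"
    and "root_count F (ball m (\<rho> * r)) = k"
    and "\<forall>z \<in> ball m (r / \<rho>) - ball m (\<rho> * r). poly F z \<noteq> 0"
  shows "T_graeffe N F k m r K"
proof -
  let ?h = "disk_graeffe_root m r N"
  define A where "A = filter_mset (\<lambda>z. z \<in> ball m (\<rho> * r)) (proots F)"
  define B where "B = filter_mset (\<lambda>z. z \<notin> ball m (\<rho> * r)) (proots F)"
  have AB: "image_mset ?h A + image_mset ?h B = image_mset ?h (proots F)"
    unfolding A_def B_def by (metis image_mset_union multiset_partition)
  obtain c where "c \<noteq> 0" and G: "graeffe_iter N (disk_poly F m r)
      = smult c (\<Prod>w\<in>#image_mset ?h A + image_mset ?h B. [:-w, 1:])"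
    using graeffe_iter_disk_poly[OF assms(1,2)] unfolding AB by blast
  have "size (image_mset ?h A) = k"
    using assms(1,7) by (simp add: A_def root_count_eq_size_proots)
  moreover have "size (image_mset ?h A + image_mset ?h B) = degree F"
    unfolding AB by (simp add: size_proots_complex)
  moreover have "norm w \<le> e" if "w \<in># image_mset ?h A" for w
  proof -
    obtain z where "dist m z < \<rho> * r" and "w = ?h z"
      using \<open>w \<in># image_mset ?h A\<close> by (auto simp: A_def)
    then have "norm w \<le> \<rho> ^ 2 ^ N"
      using assms(2) by (simp add: norm_disk_graeffe_root power_mono divide_le_eq)
    with assms(5) show ?thesis
      by simp
  qed
  moreover have "1 \<le> e * norm w" if "w \<in># image_mset ?h B" for w
  proof -
    obtain z where "z \<notin> ball m (\<rho> * r)" "poly F z = 0" and w: "w = ?h z"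
      using \<open>w \<in># image_mset ?h B\<close> assms(1) by (auto simp: B_def)
    with assms(8) have "1 / \<rho> \<le> dist m z / r"
      using assms(2) by (auto simp: field_simps)
    then have "(1 / \<rho>) ^ 2 ^ N \<le> norm w"
      unfolding w using assms(2,3) by (simp add: norm_disk_graeffe_root power_mono)
    have "1 = \<rho> ^ 2 ^ N * (1 / \<rho>) ^ 2 ^ N"
      using assms(3) by (simp flip: power_mult_distrib)
    also have "\<dots> \<le> e * norm w"
      using \<open>(1 / \<rho>) ^ 2 ^ N \<le> norm w\<close> assms(3,5)
        order_trans[OF zero_le_power[OF less_imp_le[OF assms(3)]] assms(5)]
      by (intro mult_mono) auto
    finally show ?thesis .
  qed
  ultimately have "T_test k K (smult c (\<Prod>w\<in>#image_mset ?h A + image_mset ?h B. [:-w, 1:]))"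
    using T_test_separated_linear_factors[OF \<open>c \<noteq> 0\<close> assms(4), of "image_mset ?h A" e "image_mset ?h B"]
      assms(6) by simp
  then show ?thesis
    unfolding T_graeffe_def G .
qed

section \<open>Numerical estimates\<close>

lemma power_one_plus_le_exp:
  fixes x :: real
  assumes "0 \<le> x"
  shows "(1 + x) ^ n \<le> exp (n * x)"
proof -
  have "(1 + x) ^ n \<le> exp x ^ n"
    using assms by (intro power_mono) auto
  then show ?thesis
    by (simp add: exp_of_nat_mult)
qed

lemma power_one_plus_inverse_16n_bound:
  assumes "n \<ge> 1"
  shows "3 / 2 * ((1 + 1 / (16 * real n)) ^ n - 1) < 1"
proof -
  have "(1 + 1 / (16 * real n)) ^ n \<le> exp (1 / 16)"
    using power_one_plus_le_exp[of "1 / (16 * real n)" n] assms by simp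
  also have "\<dots> \<le> 1 + 1 / 16 + (1 / 16)\<^sup>2"
    by (rule exp_bound) auto
  finally show ?thesis
    by (simp add: power2_eq_square)
qed

lemma two_sqrt_two_div_three_power_less:
  fixes n :: nat
  assumes "n \<ge> 2"
  defines "N \<equiv> nat \<lceil>log 2 (1 + log 2 (real n))\<rceil> + 5"
  shows "(2 * sqrt 2 / 3) ^ 2 ^ N < 1 / (16 * real n)"
proof -
  \<comment> \<open>\<open>(2 sqrt 2 / 3)\<^sup>2 = 8/9\<close> and \<open>2 ^ N = 32 t\<close> with \<open>t \<ge> 1 + log 2 n\<close>\<close>
  define L where "L = log 2 (real n)"
  define t :: nat where "t = 2 ^ nat \<lceil>log 2 (1 + L)\<rceil>"
  define q :: real where "q = (8 / 9) ^ 16"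
  have q: "0 \<le> q" "q \<le> 1 / 6"
    unfolding q_def by (simp_all add: power_divide)
  have "L \<ge> 1" and nL: "2 powr L = real n"
    using assms(1) by (simp_all add: L_def)
  have "1 + L = 2 powr log 2 (1 + L)"
    using \<open>L \<ge> 1\<close> by simp
  also have "\<dots> \<le> 2 powr real (nat \<lceil>log 2 (1 + L)\<rceil>)"
    by (intro powr_mono) linarith+
  also have "\<dots> = real t"
    by (simp add: t_def powr_realpow)
  finally have t: "1 + L \<le> real t" .
  have "(2 * sqrt 2 / 3) ^ 2 ^ N = ((2 * sqrt 2 / 3)\<^sup>2) ^ (16 * t)"
    unfolding N_def t_def L_def by (simp add: power_add mult.commute flip: power_mult)
  also have "\<dots> = q powr real t"
    by (simp add: power_divide power_mult_distrib q_def powr_realpow power_mult)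
  also have "\<dots> \<le> q powr (1 + L)"
    using q t by (intro powr_mono') auto
  also have "\<dots> = q * q powr L"
    using q by (simp add: powr_add q_def)
  also have "\<dots> \<le> q * (2 * q / real n)"
  proof -
    have "(2 * q) powr L \<le> (2 * q) powr 1"
      using q \<open>L \<ge> 1\<close> by (intro powr_mono') auto
    then have "q powr L \<le> 2 * q / real n"
      using q assms(1) by (simp add: powr_mult nL field_simps)
    with q show ?thesis
      by (intro mult_left_mono)
  qed
  also have "\<dots> < 1 / (16 * real n)"
    using assms(1) mult_mono[OF q(2) q(2)] q by (simp add: field_simps)
  finally show ?thesis .
qed

theorem lemma3p6:
  fixes F :: "complex poly" and m :: complex and r :: real and k :: nat
  assumes "degree F \<ge> 2" and "r > 0"
  defines "n \<equiv> degree F"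
    and "N \<equiv> nat \<lceil>log 2 (1 + log 2 (real (degree F)))\<rceil> + 5"
    and "\<rho>1 \<equiv> 2 * sqrt 2 / 3"
    and "\<rho>2 \<equiv> 4 / 3"
  shows "(1 / (16 * real n)) powr (1 / 2 ^ N) > \<rho>1
         \<and> (isolating F \<rho>1 \<rho>2 m r k \<longrightarrow> T_graeffe N F k m r (3/2))
         \<and> (\<forall>K. K \<ge> 1 \<and> T_graeffe N F k m r K \<longrightarrow> root_count F (ball m r) = k)"
proof -
  have "F \<noteq> 0" and "n \<ge> 2"
    using assms(1) by (auto simp: n_def)
  have "9 / 8 \<le> sqrt 2"
    by (rule real_le_rsqrt) (simp add: power2_eq_square)
  then have "\<rho>1 > 0" and "r / \<rho>1 \<le> \<rho>2 * r"
    using assms(2) by (simp_all add: \<rho>1_def \<rho>2_def field_simps)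
  have small: "\<rho>1 ^ 2 ^ N < 1 / (16 * real n)"
    unfolding \<rho>1_def N_def n_def using two_sqrt_two_div_three_power_less \<open>n \<ge> 2\<close> n_def by blast
  have "\<rho>1 = (\<rho>1 ^ 2 ^ N) powr (1 / 2 ^ N)"
    using \<open>\<rho>1 > 0\<close> by (simp add: powr_realpow[symmetric] powr_powr)
  also have "\<dots> < (1 / (16 * real n)) powr (1 / 2 ^ N)"
    using small \<open>\<rho>1 > 0\<close> by (intro powr_less_mono2) auto
  finally have "\<rho>1 < (1 / (16 * real n)) powr (1 / 2 ^ N)" .
  moreover have "T_graeffe N F k m r (3/2)" if "isolating F \<rho>1 \<rho>2 m r k"
    using that \<open>r / \<rho>1 \<le> \<rho>2 * r\<close> small power_one_plus_inverse_16n_bound[of n] \<open>n \<ge> 2\<close>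
    by (intro T_graeffe_if_isolated[OF \<open>F \<noteq> 0\<close> assms(2) \<open>\<rho>1 > 0\<close>, of "3/2" N "1 / (16 * real n)"])
      (auto simp: isolating_def n_def)
  moreover have "root_count F (ball m r) = k" if "K \<ge> 1" and "T_graeffe N F k m r K" for K
    using root_count_ball_if_T_graeffe[OF \<open>F \<noteq> 0\<close> assms(2) that] .
  ultimately show ?thesis
    by blast
qed

end
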